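(* Let $n\ge4$ be even, let $\gamma\in\mathbb{F}_4\setminus\mathbb{F}_2$, and let $F=\mathrm{Inv}\circ(0,1,\gamma)$ on $\mathbb{F}_{2^n}$. If $c\in\mathbb{F}_{2^n}\setminus\mathbb{F}_4$, then $3\le{}_c\Delta_F\le4$. Furthermore, ${}_c\Delta_F=3$ if $\mathrm{tr}(c\gamma)=\mathrm{tr}(c\gamma^2)=\mathrm{tr}(c^{-1}\gamma)=\mathrm{tr}(c^{-1}\gamma^2)=\mathrm{tr}\left(\frac{c}{(c+\gamma)^2}\right)=\mathrm{tr}\left(\frac{c\gamma^2}{(c+\gamma)^2}\right)=\mathrm{tr}\left(\frac{c\gamma}{(c+\gamma^2)^2}\right)=\mathrm{tr}\left(\frac{c}{(c+\gamma^2)^2}\right)=1$.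
   Context: $\mathbb{F}_4$ is the subfield of order $4$ of $\mathbb{F}_{2^n}$. $\mathrm{Inv}(x)=x^{2^n-2}$ on $\mathbb{F}_{2^n}$. $(0,1,\gamma)$ is the $3$-cycle sending $0\mapsto1$, $1\mapsto\gamma$, $\gamma\mapsto0$ and fixing all other elements; thus $F(0)=1$, $F(1)=\gamma^{-1}$, $F(\gamma)=0$ and $F(x)=x^{-1}$ otherwise. $\mathrm{tr}$ is the absolute trace $\mathbb{F}_{2^n}\to\mathbb{F}_2$. For $c\in\mathbb{F}_{2^n}$, ${}_cD_aF(x)=F(x+a)+cF(x)$; ${}_c\Delta_F(a,b)$ is the number of $x\in\mathbb{F}_{2^n}$ with ${}_cD_aF(x)=b$; and ${}_c\Delta_F=\max\{{}_c\Delta_F(a,b): a,b\in\mathbb{F}_{2^n},\ a\neq 0 \text{ if } c=1\}$. *)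

theory Defs
  imports Main
begin

text \<open>The field F_{2^n} is modelled as a finite field type 'a with CARD('a) = 2^n.
  Absolute trace F_{2^n} -> F_2 (values 0 or 1 inside the field).\<close>
definition tr :: "nat \<Rightarrow> 'a::field \<Rightarrow> 'a" where
  "tr n x = (\<Sum>i<n. x ^ (2 ^ i))"

text \<open>Inv composed with the 3-cycle (0,1,gamma); Inv(x) = x^(2^n-2) agrees with
  Isabelle's inverse (inverse 0 = 0).\<close>
definition invCycle :: "'a::field \<Rightarrow> 'a \<Rightarrow> 'a" where
  "invCycle \<gamma> x = (if x = 0 then 1 else if x = 1 then inverse \<gamma>
                    else if x = \<gamma> then 0 else inverse x)"

definition cDelta :: "('a::field \<Rightarrow> 'a) \<Rightarrow> 'a \<Rightarrow> 'a \<Rightarrow> 'a \<Rightarrow> nat" where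
  "cDelta F c a b = card {x. F (x + a) + c * F x = b}"

definition cDU :: "('a::{field,finite} \<Rightarrow> 'a) \<Rightarrow> 'a \<Rightarrow> nat" where
  "cDU F c = Max {cDelta F c a b | a b. a \<noteq> 0 \<or> c \<noteq> 1}"

end

theory Submission
  imports Defs "HOL-Number_Theory.Residues" "HOL-Computational_Algebra.Polynomial"
begin

(*
  For a = 0 the equation F(x + a) + c F(x) = b is (1 + c) F(x) = b, with at most one solution.
  For a <> 0, outside the six exceptional points where x or x + a lies in {0, 1, gamma}, F is
  inversion and the equation becomes the quadratic b x^2 + (a b + 1 + c) x + c a = 0.  Among the
  exceptional points, x and x + a never both solve, and a solution in each of the three pairs
  {t, a + t} would make a a common root of two quadratics whose resultant is a nonzero product
  of factors c + zeta with zeta in F4; for a in F4 the exceptional points form F4, where the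
  equation is injective because c is not in F4.  This gives the bound 4.

  Two exceptional solutions make a (up to a shift) a root of a quadratic A y^2 + B y + C, which
  forces tr(A C / B^2) = 0; the eight trace conditions exclude every such collision, so the
  bound drops to 3.  The lower bound comes from a = omega (1 + c) and b = 1 + c / a, with omega a
  primitive cube root of unity: b is attained at x = a and at both roots of the quadratic.
*)

section \<open>Characteristic two and the absolute trace\<close>

lemma CHAR_eq_2_of_card:
  assumes "card (UNIV :: 'a::{field,finite} set) = 2 ^ n" "n \<noteq> 0"
  shows "CHAR('a) = 2"
proof -
  have "prime CHAR('a)"
    by (rule prime_CHAR_semidom[OF finite_imp_CHAR_pos]) simp
  moreover have "CHAR('a) dvd 2 ^ n"
    using CHAR_dvd_CARD[where 'a='a] assms(1) by simp
  ultimately show ?thesis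
    using prime_dvd_power[of "CHAR('a)" 2 n] primes_dvd_imp_eq two_is_prime_nat by blast
qed

lemma add_self_CHAR_2:
  fixes x :: "'a::ring_1"
  assumes "CHAR('a) = 2"
  shows "x + x = 0"
  using uminus_CHAR_2[OF assms, of x] by (metis add.right_inverse)

lemma add_eq_0_iff_eq_CHAR_2:
  fixes x y :: "'a::ring_1"
  assumes "CHAR('a) = 2"
  shows "x + y = 0 \<longleftrightarrow> x = y"
  using uminus_CHAR_2[OF assms, of y] by (simp add: add_eq_0_iff2)

lemma numeral_CHAR_2:
  assumes "CHAR('a::ring_1) = 2"
  shows "(numeral (Num.Bit0 k) :: 'a) = 0" "(numeral (Num.Bit1 k) :: 'a) = 1"
  using add_self_CHAR_2[OF assms] by (simp_all add: numeral_Bit0 numeral_Bit1)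

text \<open>The library has this as \<open>finite_field_power_card_eq_same\<close> for the type class
  \<open>finite_field\<close>; here the field is only of sort \<open>{field, finite}\<close>.\<close>

lemma power_card_eq_self:
  fixes x :: "'a::{field,finite}"
  shows "x ^ card (UNIV :: 'a set) = x"
proof (cases "x = 0")
  case False
  have bij: "bij_betw ((*) x) (UNIV - {0}) (UNIV - {0})"
    by (rule bij_betwI[of _ _ _ "\<lambda>y. y / x"]) (use False in auto)
  have "x ^ card (UNIV - {0::'a}) * (\<Prod>y\<in>UNIV - {0}. y) = (\<Prod>y\<in>UNIV - {0}. x * y)"
    by (simp add: prod.distrib)
  also have "\<dots> = (\<Prod>y\<in>UNIV - {0}. y)"
    using prod.reindex_bij_betw[OF bij, of id] by simp
  finally have "x ^ (card (UNIV :: 'a set) - 1) = 1"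
    by (simp add: card_Diff_singleton)
  hence "x * x ^ (card (UNIV :: 'a set) - 1) = x" by simp
  thus ?thesis
    by (metis finite_UNIV_card_ge_0 finite power_eq_if less_irrefl)
qed (simp add: finite_UNIV_card_ge_0)

lemma tr_add:
  fixes x y :: "'a::field"
  assumes "CHAR('a) = 2"
  shows "tr n (x + y) = tr n x + tr n y"
  unfolding tr_def using assms by (simp add: freshmans_dream' sum.distrib)

lemma tr_one:
  assumes "CHAR('a::field) = 2" "even n"
  shows "tr n (1::'a) = 0"
  unfolding tr_def using assms by (simp add: of_nat_eq_0_iff_char_dvd)

lemma tr_square_add_self:
  fixes w :: "'a::{field,finite}"
  assumes "CHAR('a) = 2" "card (UNIV :: 'a set) = 2 ^ n"
  shows "tr n (w ^ 2 + w) = 0"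
proof -
  have "tr n (w ^ 2 + w) = (\<Sum>i<n. w ^ 2 ^ Suc i - w ^ 2 ^ i)"
    unfolding tr_def using assms(1)
    by (simp add: freshmans_dream' minus_CHAR_2 flip: power_mult)
  also have "\<dots> = w ^ 2 ^ n - w ^ 2 ^ 0"
    by (rule sum_lessThan_telescope)
  also have "\<dots> = 0"
    using power_card_eq_self[of w] assms(2) by simp
  finally show ?thesis .
qed

text \<open>The easy half of additive Hilbert 90: \<open>x\<^sup>2 + x = e\<close> is solvable only if \<open>tr e = 0\<close>.\<close>

lemma tr_quadratic_root:
  fixes A B C a :: "'a::{field,finite}"
  assumes "CHAR('a) = 2" "card (UNIV :: 'a set) = 2 ^ n"
    and "A * a ^ 2 + B * a + C = 0" "B \<noteq> 0"
  shows "tr n (A * C / B ^ 2) = 0"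
proof -
  have "C = A * a ^ 2 + B * a"
    using assms(3) uminus_CHAR_2[OF assms(1)] by (metis add_eq_0_iff2)
  hence "A * C / B ^ 2 = (A * a / B) ^ 2 + A * a / B"
    using assms(4) by (simp add: field_simps power2_eq_square)
  thus ?thesis
    using tr_square_add_self[OF assms(1,2)] by simp
qed

lemma inverse_collision_quadratic:
  fixes y z l r p q :: "'a::field"
  assumes char: "CHAR('a) = 2" and nz: "y \<noteq> 0" "z \<noteq> 0"
    and eq: "l * inverse y + p = r * inverse z + q"
  shows "(p + q) * y * z + l * z + r * y = 0"
proof -
  have "(l * inverse y + p) * (y * z) = l * z + p * (y * z)"
    and "(r * inverse z + q) * (y * z) = r * y + q * (y * z)"
    using nz by (simp_all add: field_simps)
  hence "l * z + p * (y * z) + (r * y + q * (y * z)) = 0"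
    using eq add_self_CHAR_2[OF char] by metis
  thus ?thesis
    by (simp add: algebra_simps)
qed

lemma tr_inverse_collision:
  fixes a s t l r p q :: "'a::{field,finite}"
  assumes char: "CHAR('a) = 2" and card: "card (UNIV :: 'a set) = 2 ^ n"
    and nz: "a + s \<noteq> 0" "a + t \<noteq> 0"
    and eq: "l * inverse (a + s) + p = r * inverse (a + t) + q"
    and B: "(p + q) * (s + t) + l + r \<noteq> 0"
  shows "tr n ((p + q) * ((p + q) * s * t + l * t + r * s) / ((p + q) * (s + t) + l + r) ^ 2) = 0"
proof (rule tr_quadratic_root[OF char card _ B])
  have "(p + q) * (a + s) * (a + t) + l * (a + t) + r * (a + s) = 0"
    by (rule inverse_collision_quadratic[OF char nz eq])
  thus "(p + q) * a ^ 2 + ((p + q) * (s + t) + l + r) * a + ((p + q) * s * t + l * t + r * s) = 0"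
    by (simp add: algebra_simps power2_eq_square)
qed

lemma tr_inverse_collision_same:
  fixes y z l p q :: "'a::{field,finite}"
  assumes char: "CHAR('a) = 2" and card: "card (UNIV :: 'a set) = 2 ^ n"
    and nz: "y \<noteq> 0" "z \<noteq> 0"
    and eq: "l * inverse y + p = l * inverse z + q"
    and B: "(p + q) * (y + z) \<noteq> 0"
  shows "tr n (l / ((p + q) * (y + z))) = 0"
proof -
  have "(p + q) * y * z + l * z + l * y = 0"
    by (rule inverse_collision_quadratic[OF char nz eq])
  hence "(p + q) * y ^ 2 + (p + q) * (y + z) * y + l * (y + z) = 0"
    by (simp add: algebra_simps power2_eq_square numeral_CHAR_2[OF char])
  from tr_quadratic_root[OF char card this B]
  show ?thesis
    using B by (simp add: power2_eq_square)
qed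

section \<open>Counting roots\<close>

lemma card_quadratic_roots_le_2:
  fixes A B C :: "'a::idom"
  assumes "C \<noteq> 0"
  shows "card {x. A * x ^ 2 + B * x + C = 0} \<le> 2"
proof -
  have "{x. A * x ^ 2 + B * x + C = 0} = {x. poly [:C, B, A:] x = 0}"
    by (simp add: algebra_simps power2_eq_square)
  also have "card \<dots> \<le> degree [:C, B, A:]"
    by (rule card_poly_roots_bound) (use assms in auto)
  also have "\<dots> \<le> 2"
    by simp
  finally show ?thesis .
qed

definition quadratic_resultant :: "'a::comm_ring_1 \<Rightarrow> 'a \<Rightarrow> 'a \<Rightarrow> 'a \<Rightarrow> 'a \<Rightarrow> 'a \<Rightarrow> 'a" where
  "quadratic_resultant a1 b1 c1 a2 b2 c2 = (a1 * c2 - a2 * c1)^2 - (a1 * b2 - a2 * b1) * (b1 * c2 - b2 * c1)"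

lemma quadratic_resultant_eq_0:
  fixes a1 b1 c1 a2 b2 c2 x :: "'a::idom"
  assumes f: "a1 * x^2 + b1 * x + c1 = 0" and g: "a2 * x^2 + b2 * x + c2 = 0"
  shows "quadratic_resultant a1 b1 c1 a2 b2 c2 = 0"
proof -
  define P Q S where "P = a1 * b2 - a2 * b1" and "Q = a1 * c2 - a2 * c1" and "S = b1 * c2 - b2 * c1"
  have "P * x + Q = a1 * (a2 * x^2 + b2 * x + c2) - a2 * (a1 * x^2 + b1 * x + c1)"
    and "x * (Q * x + S) = c2 * (a1 * x^2 + b1 * x + c1) - c1 * (a2 * x^2 + b2 * x + c2)"
    by (simp_all add: P_def Q_def S_def algebra_simps power2_eq_square)
  hence lin: "P * x + Q = 0" and quad: "x * (Q * x + S) = 0"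
    using f g by simp_all
  have "Q^2 - P * S = 0"
  proof (cases "x = 0")
    case True
    thus ?thesis
      using f g by (simp add: Q_def S_def)
  next
    case False
    hence "S = - (Q * x)"
      using quad by (simp add: eq_neg_iff_add_eq_0 add.commute)
    hence "Q^2 - P * S = Q * (P * x + Q)"
      by (simp add: algebra_simps power2_eq_square)
    thus ?thesis
      using lin by simp
  qed
  thus ?thesis
    by (simp add: quadratic_resultant_def P_def Q_def S_def)
qed

lemma card_fiber_le_1:
  assumes "inj_on f A"
  shows "card ({x. f x = b} \<inter> A) \<le> 1"
proof (cases "{x. f x = b} \<inter> A = {}")
  case False
  then obtain x0 where "x0 \<in> A" "f x0 = b"
    by auto
  hence "{x. f x = b} \<inter> A \<subseteq> {x0}"
    using assms by (auto dest: inj_onD)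
  thus ?thesis
    using card_mono[of "{x0}"] by fastforce
qed simp

section \<open>The subfield \<open>\<bbbF>\<^sub>4\<close>\<close>

text \<open>In characteristic two the roots of \<open>x\<^sup>4 = x\<close> form the subfield of order at most 4.\<close>

definition F4 :: "'a::field set" where
  "F4 = {x. x ^ 4 = x}"

lemma zero_in_F4 [simp]: "0 \<in> F4" and one_in_F4 [simp]: "1 \<in> F4"
  by (simp_all add: F4_def)

lemma F4_add:
  fixes x y :: "'a::field"
  assumes "CHAR('a) = 2" "x \<in> F4" "y \<in> F4"
  shows "x + y \<in> F4"
  using assms freshmans_dream'[of 4 2 x y] by (simp add: F4_def)

lemma F4_mult: "x \<in> F4 \<Longrightarrow> y \<in> F4 \<Longrightarrow> x * y \<in> F4"
  by (simp add: F4_def power_mult_distrib)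

lemma F4_inverse: "x \<in> F4 \<Longrightarrow> inverse x \<in> F4"
  by (simp add: F4_def power_inverse)

lemma F4_divide: "x \<in> F4 \<Longrightarrow> y \<in> F4 \<Longrightarrow> x / y \<in> F4"
  by (simp add: divide_inverse F4_mult F4_inverse)

lemma add_notin_F4:
  fixes x \<zeta> :: "'a::field"
  assumes "CHAR('a) = 2" "x \<notin> F4" "\<zeta> \<in> F4"
  shows "x + \<zeta> \<notin> F4"
  using F4_add[OF assms(1), of "x + \<zeta>" \<zeta>] assms add_self_CHAR_2[OF assms(1), of \<zeta>]
  by (auto simp: add.assoc)

lemma mult_notin_F4:
  assumes "x \<notin> F4" "\<alpha> \<in> F4" "\<alpha> \<noteq> 0"
  shows "\<alpha> * x \<notin> F4"
  using F4_divide[of "\<alpha> * x" \<alpha>] assms by auto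

lemma F4_square:
  fixes x :: "'a::field"
  assumes char: "CHAR('a) = 2" and x: "x \<in> F4" "x \<noteq> 0" "x \<noteq> 1"
  shows "x^2 = x + 1"
proof -
  have "x * (x^3 - 1) = 0"
    using x(1) by (simp add: F4_def algebra_simps eval_nat_numeral)
  hence "(x - 1) * (x^2 + x + 1) = 0"
    using x(2) by (simp add: algebra_simps eval_nat_numeral)
  hence "x^2 + (x + 1) = 0"
    using x(3) by (simp add: add.assoc)
  thus ?thesis
    by (simp only: add_eq_0_iff_eq_CHAR_2[OF char])
qed

locale F4_cycle =
  fixes \<gamma> :: "'a::{field,finite}"
  assumes CHAR_2: "CHAR('a) = 2" and gamma_sq: "\<gamma> ^ 2 = \<gamma> + 1"
begin

lemma gamma_mult_gamma: "\<gamma> * \<gamma> = \<gamma> + 1" "\<gamma> * (\<gamma> * x) = \<gamma> * x + x"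
  using gamma_sq by (simp_all add: power2_eq_square distrib_right flip: mult.assoc)

lemmas add_eq_0_iff_eq = add_eq_0_iff_eq_CHAR_2[OF CHAR_2]
  and add_self_eq_0 = add_self_CHAR_2[OF CHAR_2]

lemma add_self_left: "x + (x + y) = y" for x y :: 'a
  by (simp add: add_self_eq_0 flip: add.assoc)

lemmas gf4_simps = numeral_CHAR_2[OF CHAR_2] uminus_CHAR_2[OF CHAR_2] minus_CHAR_2[OF CHAR_2]
  algebra_simps eval_nat_numeral gamma_mult_gamma add_self_eq_0 add_self_left

lemma add_eq_iff_eq_add: "x + y = z \<longleftrightarrow> x = y + z" for x y z :: 'a
  using add_eq_0_iff_eq[of "x + y" z] add_eq_0_iff_eq[of x "y + z"] by (simp add: add.assoc)

lemma neq_if_add_ne_0: "x + y \<noteq> 0 \<Longrightarrow> x \<noteq> y" for x y :: 'a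
  by (simp add: add_eq_0_iff_eq)

lemma add_add_cancel_left: "(a + s) + (a + t) = s + t" for a s t :: 'a
  by (simp add: gf4_simps)

lemma gamma_ne_0: "\<gamma> \<noteq> 0" and gamma_ne_1: "\<gamma> \<noteq> 1"
  using gamma_sq numeral_CHAR_2[OF CHAR_2, of Num.One] by auto

lemma gamma_add_1_ne_0: "\<gamma> + 1 \<noteq> 0"
  using gamma_sq gamma_ne_0 by auto

lemma inverse_gamma: "inverse \<gamma> = \<gamma> + 1"
  by (rule inverse_unique) (simp add: gf4_simps)

lemma gamma_in_F4: "\<gamma> \<in> F4"
  by (simp add: F4_def gf4_simps)

lemma gamma_add_1_in_F4: "\<gamma> + 1 \<in> F4"
  using F4_add[OF CHAR_2 gamma_in_F4 one_in_F4] .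

lemma base_points_subset_F4: "{0, 1, \<gamma>} \<subseteq> F4"
  using gamma_in_F4 by simp

lemma add_base_point_notin: "a \<notin> F4 \<Longrightarrow> t \<in> {0, 1, \<gamma>} \<Longrightarrow> a + t \<notin> {0, 1, \<gamma>}"
  using add_notin_F4[OF CHAR_2, of a t] base_points_subset_F4 by blast

lemma invCycle_0 [simp]: "invCycle \<gamma> 0 = 1"
  and invCycle_1 [simp]: "invCycle \<gamma> 1 = \<gamma> + 1"
  and invCycle_gamma [simp]: "invCycle \<gamma> \<gamma> = 0"
  using gamma_ne_0 gamma_ne_1 by (simp_all add: invCycle_def inverse_gamma)

lemma invCycle_eq_inverse: "x \<notin> {0, 1, \<gamma>} \<Longrightarrow> invCycle \<gamma> x = inverse x"
  by (simp add: invCycle_def)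

lemma invCycle_in_F4: "x \<in> F4 \<Longrightarrow> invCycle \<gamma> x \<in> F4"
  by (auto simp: invCycle_def F4_inverse gamma_in_F4)

lemma inj_invCycle: "inj (invCycle \<gamma>)"
  using gamma_ne_0 gamma_ne_1 by (auto simp: inj_def invCycle_def)

text \<open>All three pairs have the same weight, so every collision of two base points produces
  the same trace condition.\<close>

lemma invCycle_base_pair:
  assumes "s \<in> {0, 1, \<gamma>}" "t \<in> {0, 1, \<gamma>}" "s \<noteq> t"
  shows "(invCycle \<gamma> s + invCycle \<gamma> t) * (s + t) = \<gamma>"
  using assms by (auto simp: gf4_simps)

text \<open>The points where \<open>F(x)\<close> or \<open>F(x + a)\<close> is not given by inversion.\<close>

definition exceptional :: "'a \<Rightarrow> 'a set" where
  "exceptional a = {0, 1, \<gamma>, a, a + 1, a + \<gamma>}"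

lemma exceptional_cases:
  assumes "x \<in> exceptional a"
  obtains t where "t \<in> {0, 1, \<gamma>}" "x = t" | t where "t \<in> {0, 1, \<gamma>}" "x = a + t"
  using assms by (auto simp: exceptional_def)

lemma notin_exceptional:
  assumes "x \<notin> {0, 1, \<gamma>}" "x + a \<notin> {0, 1, \<gamma>}"
  shows "x \<notin> exceptional a"
  using assms add_eq_iff_eq_add[of x a] by (auto simp: exceptional_def)

lemma exceptional_subset_F4: "a \<in> F4 \<Longrightarrow> exceptional a \<subseteq> F4"
  using gamma_in_F4 by (auto simp: exceptional_def intro: F4_add[OF CHAR_2])

end

section \<open>The equation \<open>F(x + a) + c F(x) = b\<close>\<close>

locale cdiff_setting = F4_cycle \<gamma> for \<gamma> :: "'a::{field,finite}" +
  fixes c :: 'a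
  assumes c_notin_F4: "c \<notin> F4"
begin

definition cdiff :: "'a \<Rightarrow> 'a \<Rightarrow> 'a" where
  "cdiff a x = invCycle \<gamma> (x + a) + c * invCycle \<gamma> x"

lemma cDelta_eq_card: "cDelta (invCycle \<gamma>) c a b = card {x. cdiff a x = b}"
  by (simp add: cDelta_def cdiff_def)

lemma c_add_F4_ne_0: "\<zeta> \<in> F4 \<Longrightarrow> c + \<zeta> \<noteq> 0"
  using add_notin_F4[OF CHAR_2 c_notin_F4] by force

lemma c_ne_0: "c \<noteq> 0" and c_add_1_ne_0: "c + 1 \<noteq> 0" and c_add_gamma_ne_0: "c + \<gamma> \<noteq> 0"
  and c_add_gamma_add_1_ne_0: "c + \<gamma> + 1 \<noteq> 0"
  using c_add_F4_ne_0[of 0] c_add_F4_ne_0[OF one_in_F4] c_add_F4_ne_0[OF gamma_in_F4]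
    c_add_F4_ne_0[OF gamma_add_1_in_F4] by (simp_all add: add.assoc)

lemma card_solutions_a0_le_1: "card {x. cdiff 0 x = b} \<le> 1"
proof -
  have "cdiff 0 = (\<lambda>x. (1 + c) * x) \<circ> invCycle \<gamma>"
    by (auto simp: cdiff_def algebra_simps)
  moreover have "inj ((\<lambda>x. (1 + c) * x) \<circ> invCycle \<gamma>)"
    using c_add_1_ne_0 inj_invCycle by (auto simp: inj_def add.commute)
  ultimately show ?thesis
    using card_fiber_le_1[of "cdiff 0" UNIV b] by simp
qed

lemma cdiff_shift: "cdiff a (x + a) = invCycle \<gamma> x + c * invCycle \<gamma> (x + a)"
  by (simp add: cdiff_def add.assoc add_self_eq_0)

lemma cdiff_shift_ne:
  assumes "a \<noteq> 0"
  shows "cdiff a (x + a) \<noteq> cdiff a x"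
proof
  assume "cdiff a (x + a) = cdiff a x"
  hence "cdiff a (x + a) + cdiff a x = 0"
    by (simp only: add_eq_0_iff_eq)
  moreover have "cdiff a (x + a) + cdiff a x = (1 + c) * (invCycle \<gamma> (x + a) + invCycle \<gamma> x)"
    by (simp add: cdiff_shift cdiff_def gf4_simps)
  ultimately have "invCycle \<gamma> (x + a) + invCycle \<gamma> x = 0"
    using c_add_1_ne_0 by (simp add: add.commute)
  hence "invCycle \<gamma> (x + a) = invCycle \<gamma> x"
    by (simp only: add_eq_0_iff_eq)
  hence "x + a = x"
    using inj_invCycle by (simp add: inj_eq)
  thus False
    using assms by simp
qed

lemma inj_on_cdiff_F4:
  assumes "a \<in> F4"
  shows "inj_on (cdiff a) F4"
proof
  fix x y assume x: "x \<in> F4" and y: "y \<in> F4" and eq: "cdiff a x = cdiff a y"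
  show "x = y"
  proof (rule ccontr)
    assume "x \<noteq> y"
    hence ne: "invCycle \<gamma> x + invCycle \<gamma> y \<noteq> 0"
      using inj_invCycle by (simp add: inj_eq add_eq_0_iff_eq)
    have "cdiff a x + cdiff a y = 0"
      using eq by (simp only: add_eq_0_iff_eq)
    hence "c * (invCycle \<gamma> x + invCycle \<gamma> y) + (invCycle \<gamma> (x + a) + invCycle \<gamma> (y + a)) = 0"
      unfolding cdiff_def by (simp add: gf4_simps)
    hence "c * (invCycle \<gamma> x + invCycle \<gamma> y) = invCycle \<gamma> (x + a) + invCycle \<gamma> (y + a)"
      by (simp only: add_eq_0_iff_eq)
    hence "c = (invCycle \<gamma> (x + a) + invCycle \<gamma> (y + a)) / (invCycle \<gamma> x + invCycle \<gamma> y)"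
      using ne by (simp add: field_simps)
    moreover have "\<dots> \<in> F4"
      using x y assms by (intro F4_divide F4_add[OF CHAR_2] invCycle_in_F4) auto
    ultimately show False
      using c_notin_F4 by simp
  qed
qed

lemma card_solutions_exceptional_F4_le_1:
  assumes "a \<in> F4"
  shows "card ({x. cdiff a x = b} \<inter> exceptional a) \<le> 1"
  using inj_on_subset[OF inj_on_cdiff_F4[OF assms] exceptional_subset_F4[OF assms]]
  by (rule card_fiber_le_1)

lemma cdiff_generic:
  assumes "x \<notin> exceptional a"
  shows "cdiff a x = inverse (x + a) + c * inverse x"
proof -
  have "x + a \<notin> {0, 1, \<gamma>}"
    using assms add_eq_iff_eq_add[of x a] by (auto simp: exceptional_def)
  thus ?thesis
    using assms by (simp add: cdiff_def exceptional_def invCycle_eq_inverse)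
qed

lemma cdiff_self:
  assumes "a \<notin> {0, 1, \<gamma>}"
  shows "cdiff a a = 1 + c / a"
  using assms by (simp add: cdiff_def add_self_eq_0 invCycle_eq_inverse divide_inverse)

lemma card_solutions_outside_le_2:
  assumes "a \<noteq> 0"
  shows "card ({x. cdiff a x = b} - exceptional a) \<le> 2"
proof -
  have "{x. cdiff a x = b} - exceptional a \<subseteq> {x. b * x ^ 2 + (a * b + 1 + c) * x + c * a = 0}"
  proof
    fix x assume "x \<in> {x. cdiff a x = b} - exceptional a"
    hence x: "x \<notin> exceptional a" and eq: "cdiff a x = b"
      by auto
    have nz: "x \<noteq> 0" "x + a \<noteq> 0"
      using x add_eq_iff_eq_add[of x a 0] by (auto simp: exceptional_def)
    have "(inverse y + c * inverse x) * (x * y) = x + c * y" if "y \<noteq> 0" for y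
      using nz(1) that by (simp add: field_simps)
    hence "(inverse (x + a) + c * inverse x) * (x * (x + a)) = x + c * (x + a)"
      using nz(2) .
    hence "b * (x * (x + a)) = x + c * (x + a)"
      using eq by (simp add: cdiff_generic[OF x])
    hence "b * (x * (x + a)) + (x + c * (x + a)) = 0"
      by (simp only: add_eq_0_iff_eq)
    thus "x \<in> {x. b * x ^ 2 + (a * b + 1 + c) * x + c * a = 0}"
      by (simp add: gf4_simps)
  qed
  hence "card ({x. cdiff a x = b} - exceptional a) \<le> card {x. b * x ^ 2 + (a * b + 1 + c) * x + c * a = 0}"
    by (intro card_mono) auto
  also have "\<dots> \<le> 2"
    using assms c_ne_0 by (intro card_quadratic_roots_le_2) simp
  finally show ?thesis .
qed

lemma cDelta_le_exceptional:
  assumes "a \<noteq> 0"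
  shows "cDelta (invCycle \<gamma>) c a b \<le> card ({x. cdiff a x = b} \<inter> exceptional a) + 2"
  using card_Int_Diff[of "{x. cdiff a x = b}" "exceptional a"] card_solutions_outside_le_2[OF assms]
  by (simp add: cDelta_eq_card)

lemma cdiff_base_point:
  assumes "a \<notin> F4" "t \<in> {0, 1, \<gamma>}"
  shows "cdiff a t = inverse (a + t) + c * invCycle \<gamma> t"
  using add_base_point_notin[OF assms]
  by (simp add: cdiff_def invCycle_eq_inverse add.commute)

lemma cdiff_shifted_base_point:
  assumes "a \<notin> F4" "t \<in> {0, 1, \<gamma>}"
  shows "cdiff a (a + t) = c * inverse (a + t) + invCycle \<gamma> t"
  using cdiff_shift[of a t] add_base_point_notin[OF assms]
  by (simp add: invCycle_eq_inverse add.commute)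

lemma cdiff_at_exceptional:
  assumes "a \<notin> F4" "t \<in> {0, 1, \<gamma>}" "x \<in> {t, a + t}"
  obtains l p where "(l, p) \<in> {(1, c * invCycle \<gamma> t), (c, invCycle \<gamma> t)}"
    and "cdiff a x = l * inverse (a + t) + p"
  using assms cdiff_base_point[OF assms(1,2)] cdiff_shifted_base_point[OF assms(1,2)]
  by (metis insertCI insertE mult_1 singletonD)

text \<open>The resultant splits into factors \<open>c + \<zeta>\<close> with \<open>\<zeta> \<in> \<bbbF>\<^sub>4\<close>, so it only vanishes for \<open>c \<in> \<bbbF>\<^sub>4\<close>.\<close>

lemma triple_resultant_ne_0:
  assumes "(l0, p0) \<in> {(1, c), (c, 1)}" "(l1, p1) \<in> {(1, c * (\<gamma> + 1)), (c, \<gamma> + 1)}"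
    "(lg, pg) \<in> {(1, 0), (c, 0)}"
  shows "quadratic_resultant (p0 + p1) (p0 + p1 + l0 + l1) l0
    (p0 + pg) ((p0 + pg) * \<gamma> + l0 + lg) (l0 * \<gamma>) \<noteq> 0"
proof -
  have "quadratic_resultant (p0 + p1) (p0 + p1 + l0 + l1) l0 (p0 + pg) ((p0 + pg) * \<gamma> + l0 + lg) (l0 * \<gamma>)
    \<in> {c^2 * (c + \<gamma> + 1), \<gamma> * c, (\<gamma> + 1) * (c + \<gamma>)^2 * (c + \<gamma> + 1), \<gamma> * c^3,
       c * (c + \<gamma>) * (c + \<gamma> + 1)^2, (\<gamma> + 1) * c * (c + \<gamma>)}"
    using assms by (auto simp: quadratic_resultant_def gf4_simps)
  thus ?thesis
    using c_ne_0 c_add_gamma_ne_0 c_add_gamma_add_1_ne_0 gamma_ne_0 gamma_sq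
    by auto
qed

lemma no_triple_collision:
  assumes a: "a \<notin> F4" and x: "x0 \<in> {0, a}" "x1 \<in> {1, a + 1}" "xg \<in> {\<gamma>, a + \<gamma>}"
    and eq: "cdiff a x0 = cdiff a x1" "cdiff a x0 = cdiff a xg"
  shows False
proof -
  obtain l0 p0 where "(l0, p0) \<in> {(1, c * invCycle \<gamma> 0), (c, invCycle \<gamma> 0)}"
    and "cdiff a x0 = l0 * inverse (a + 0) + p0"
    by (rule cdiff_at_exceptional[OF a, of 0 x0]) (use x(1) in auto)
  hence lp0: "(l0, p0) \<in> {(1, c), (c, 1)}" and v0: "cdiff a x0 = l0 * inverse a + p0"
    by simp_all
  obtain l1 p1 where lp1: "(l1, p1) \<in> {(1, c * (\<gamma> + 1)), (c, \<gamma> + 1)}"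
    and v1: "cdiff a x1 = l1 * inverse (a + 1) + p1"
    by (rule cdiff_at_exceptional[OF a, of 1 x1]) (use x(2) in auto)
  obtain lg pg where "(lg, pg) \<in> {(1, c * invCycle \<gamma> \<gamma>), (c, invCycle \<gamma> \<gamma>)}"
    and vg: "cdiff a xg = lg * inverse (a + \<gamma>) + pg"
    by (rule cdiff_at_exceptional[OF a, of \<gamma> xg]) (use x(3) in auto)
  hence lpg: "(lg, pg) \<in> {(1, 0), (c, 0)}"
    by simp
  have nz: "a \<noteq> 0" "a + 1 \<noteq> 0" "a + \<gamma> \<noteq> 0"
    using add_base_point_notin[OF a, of 0] add_base_point_notin[OF a, of 1]
      add_base_point_notin[OF a, of \<gamma>] by auto
  have "(p0 + p1) * a * (a + 1) + l0 * (a + 1) + l1 * a = 0"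
    using eq(1) v0 v1 nz by (intro inverse_collision_quadratic[OF CHAR_2]) auto
  hence q1: "(p0 + p1) * a^2 + (p0 + p1 + l0 + l1) * a + l0 = 0"
    by (simp add: gf4_simps)
  have "(p0 + pg) * a * (a + \<gamma>) + l0 * (a + \<gamma>) + lg * a = 0"
    using eq(2) v0 vg nz by (intro inverse_collision_quadratic[OF CHAR_2]) auto
  hence q2: "(p0 + pg) * a^2 + ((p0 + pg) * \<gamma> + l0 + lg) * a + l0 * \<gamma> = 0"
    by (simp add: gf4_simps)
  show False
    using quadratic_resultant_eq_0[OF q1 q2] triple_resultant_ne_0[OF lp0 lp1 lpg] by simp
qed

lemma card_solutions_exceptional_le_2:
  assumes a: "a \<notin> F4"
  shows "card ({x. cdiff a x = b} \<inter> exceptional a) \<le> 2"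
proof -
  define S where "S t = {x. cdiff a x = b} \<inter> {t, a + t}" for t
  have "a \<noteq> 0"
    using a by auto
  hence "inj_on (cdiff a) {t, a + t}" for t
    using cdiff_shift_ne[of a t] by (simp add: add.commute)
  hence le1: "card (S t) \<le> 1" for t
    unfolding S_def by (rule card_fiber_le_1)
  have "S 0 = {} \<or> S 1 = {} \<or> S \<gamma> = {}"
  proof (rule ccontr)
    assume "\<not> ?thesis"
    then obtain x0 x1 xg where "x0 \<in> S 0" "x1 \<in> S 1" "xg \<in> S \<gamma>"
      by blast
    thus False
      using no_triple_collision[OF a, of x0 x1 xg] by (simp add: S_def)
  qed
  hence "card (S 0) + card (S 1) + card (S \<gamma>) \<le> 2"
    using le1[of 0] le1[of 1] le1[of \<gamma>] by auto
  moreover have "{x. cdiff a x = b} \<inter> exceptional a = S 0 \<union> S 1 \<union> S \<gamma>"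
    by (auto simp: exceptional_def S_def)
  moreover have "card (S 0 \<union> S 1 \<union> S \<gamma>) \<le> card (S 0) + card (S 1) + card (S \<gamma>)"
    by (meson add_le_mono1 card_Un_le order_trans)
  ultimately show ?thesis
    by simp
qed

lemma cDelta_le_4: "cDelta (invCycle \<gamma>) c a b \<le> 4"
proof (cases "a = 0")
  case True
  thus ?thesis
    using card_solutions_a0_le_1[of b] by (simp add: cDelta_eq_card)
next
  case False
  thus ?thesis
    using cDelta_le_exceptional[OF False, of b] card_solutions_exceptional_F4_le_1[of a b]
      card_solutions_exceptional_le_2[of a b] by (cases "a \<in> F4") auto
qed

end

section \<open>Three solutions\<close>

text \<open>For a primitive cube root of unity \<open>\<omega>\<close> and \<open>a = \<omega> (1 + c)\<close>, the value \<open>b = 1 + c / a\<close>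
  is taken at \<open>x = a\<close> and at both roots \<open>\<omega>\<^sup>2 (1 + c)\<close> and \<open>c (1 + c) / (a + c)\<close> of the
  generic quadratic \<open>b x\<^sup>2 + (a b + 1 + c) x + c a\<close>.\<close>

locale cdiff_witness = cdiff_setting \<gamma> c for \<gamma> c :: "'a::{field,finite}" +
  fixes \<omega> :: 'a
  assumes omega_sq: "\<omega>^2 = \<omega> + 1"
begin

definition witness_a :: 'a where "witness_a = \<omega> * (1 + c)"
definition witness_x0 :: 'a where "witness_x0 = \<omega>^2 * (1 + c)"
definition witness_x1 :: 'a where "witness_x1 = c * (1 + c) / (witness_a + c)"

lemma omega_mult_omega: "\<omega> * \<omega> = \<omega> + 1" "\<omega> * (\<omega> * x) = \<omega> * x + x"
  using omega_sq by (simp_all add: power2_eq_square distrib_right flip: mult.assoc)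

lemma omega_ne_0: "\<omega> \<noteq> 0"
  using omega_sq by auto

lemma omega_in_F4: "\<omega> \<in> F4"
  using omega_mult_omega by (simp add: F4_def gf4_simps)

lemma omega_sq_in_F4: "\<omega>^2 \<in> F4"
  using F4_mult[OF omega_in_F4 omega_in_F4] by (simp add: power2_eq_square)

lemma one_add_c_notin_F4: "1 + c \<notin> F4"
  using add_notin_F4[OF CHAR_2 c_notin_F4 one_in_F4] by (simp add: add.commute)

lemma one_add_c_ne_0: "1 + c \<noteq> 0"
  using one_add_c_notin_F4 by auto

lemma witness_a_notin_F4: "witness_a \<notin> F4"
  and witness_x0_notin_F4: "witness_x0 \<notin> F4"
  unfolding witness_a_def witness_x0_def
  using mult_notin_F4[OF one_add_c_notin_F4] omega_in_F4 omega_sq_in_F4 omega_ne_0 by auto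

lemma witness_x0_add_a: "witness_x0 + witness_a = 1 + c"
  unfolding witness_x0_def witness_a_def using omega_mult_omega by (simp add: gf4_simps)

lemma witness_a_add_c: "witness_a + c = \<omega>^2 * (1 + c) + 1"
  unfolding witness_a_def using omega_mult_omega by (simp add: gf4_simps)

lemma witness_a_add_c_notin_F4: "\<omega>^2 * (1 + c) + 1 \<notin> F4"
  using add_notin_F4[OF CHAR_2 mult_notin_F4[OF one_add_c_notin_F4] one_in_F4]
    omega_sq_in_F4 omega_ne_0 by simp

lemma witness_a_add_c_ne_0: "\<omega>^2 * (1 + c) + 1 \<noteq> 0" "witness_a + c \<noteq> 0"
  using witness_a_add_c witness_a_add_c_notin_F4 by auto

lemma witness_x1_eq_iff: "witness_x1 = t \<longleftrightarrow> c * (1 + c) = t * (witness_a + c)"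
  using witness_a_add_c_ne_0(2) by (auto simp: witness_x1_def field_simps)

lemma witness_x1_add_a: "witness_x1 + witness_a = \<omega>^2 * (1 + c) / (\<omega>^2 * (1 + c) + 1)"
proof -
  define u where "u = 1 + c"
  have c_eq: "c = u + 1"
    by (simp add: u_def gf4_simps)
  have "\<omega>^2 * u + 1 \<noteq> 0"
    using witness_a_add_c_ne_0(1) by (simp add: u_def)
  thus ?thesis
    unfolding witness_x1_def witness_a_add_c unfolding witness_a_def u_def[symmetric]
    by (simp add: field_simps c_eq omega_mult_omega gf4_simps)
qed

lemma witness_x1_add_a_notin_F4: "witness_x1 + witness_a \<notin> F4"
proof
  define y where "y = witness_x1 + witness_a"
  assume "y \<in> F4"
  have "y * (\<omega>^2 * (1 + c) + 1) = \<omega>^2 * (1 + c)"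
    using witness_x1_add_a witness_a_add_c_ne_0(1) by (simp add: y_def)
  hence "y * (\<omega>^2 * (1 + c) + 1) + \<omega>^2 * (1 + c) = 0"
    by (simp only: add_eq_0_iff_eq)
  moreover have "y * (\<omega>^2 * (1 + c) + 1) + \<omega>^2 * (1 + c) = y + \<omega>^2 * (1 + c) * (1 + y)"
    by (simp add: gf4_simps)
  ultimately have eq: "y = \<omega>^2 * (1 + c) * (1 + y)"
    by (simp add: add_eq_0_iff_eq)
  hence "1 + y \<noteq> 0"
    by (auto simp: add_eq_0_iff_eq numeral_CHAR_2[OF CHAR_2])
  moreover have "(1 + c) * (\<omega>^2 * (1 + y)) = y"
    using eq by (metis mult.assoc mult.commute)
  ultimately have "1 + c = y / (\<omega>^2 * (1 + y))"
    using omega_ne_0 by (simp add: eq_divide_eq)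
  moreover have "y / (\<omega>^2 * (1 + y)) \<in> F4"
    using \<open>y \<in> F4\<close> omega_sq_in_F4 by (intro F4_divide F4_mult F4_add[OF CHAR_2]) auto
  ultimately show False
    using one_add_c_notin_F4 by simp
qed

lemma cdiff_witness_a: "cdiff witness_a witness_a = 1 + c / witness_a"
  using witness_a_notin_F4 base_points_subset_F4 by (intro cdiff_self) auto

lemma cdiff_witness_x0: "cdiff witness_a witness_x0 = 1 + c / witness_a"
proof -
  have "witness_x0 \<notin> exceptional witness_a"
    using witness_x0_notin_F4 one_add_c_notin_F4 base_points_subset_F4
    by (intro notin_exceptional) (auto simp: witness_x0_add_a)
  hence "cdiff witness_a witness_x0 = inverse (1 + c) + c * inverse witness_x0"
    by (simp add: cdiff_generic witness_x0_add_a)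
  also have "\<dots> = 1 + c / witness_a"
  proof -
    define u where "u = 1 + c"
    have c_eq: "c = u + 1"
      by (simp add: u_def gf4_simps)
    have "u \<noteq> 0" "\<omega>^2 * u \<noteq> 0"
      using one_add_c_ne_0 omega_ne_0 by (simp_all add: u_def)
    thus ?thesis
      using omega_ne_0 unfolding witness_x0_def witness_a_def u_def[symmetric]
      by (simp add: c_eq field_simps omega_mult_omega gf4_simps)
  qed
  finally show ?thesis .
qed

lemma cdiff_witness_x1:
  assumes "witness_x1 \<notin> {0, 1, \<gamma>}"
  shows "cdiff witness_a witness_x1 = 1 + c / witness_a"
proof -
  have "witness_x1 \<notin> exceptional witness_a"
    using assms witness_x1_add_a_notin_F4 base_points_subset_F4 by (intro notin_exceptional) auto
  hence "cdiff witness_a witness_x1 = inverse (witness_x1 + witness_a) + c * inverse witness_x1"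
    by (simp add: cdiff_generic)
  also have "\<dots> = (\<omega>^2 * (1 + c) + 1) / (\<omega>^2 * (1 + c)) + (witness_a + c) / (1 + c)"
    using c_ne_0 unfolding witness_x1_add_a by (simp add: witness_x1_def)
  also have "\<dots> = (witness_a + c) * (1 + \<omega>^2) / (\<omega>^2 * (1 + c))"
  proof -
    have "X / (\<omega>^2 * u) + X / u = X * (1 + \<omega>^2) / (\<omega>^2 * u)" if "u \<noteq> 0" for X u
      using that omega_ne_0 by (simp add: field_simps)
    thus ?thesis
      using one_add_c_ne_0 by (simp add: witness_a_add_c)
  qed
  also have "\<dots> = (witness_a + c) * \<omega> / (\<omega>^2 * (1 + c))"
    using omega_sq by (simp add: gf4_simps)
  also have "\<dots> = (witness_a + c) / witness_a"
    using omega_ne_0 one_add_c_ne_0 by (simp add: witness_a_def power2_eq_square)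
  also have "\<dots> = 1 + c / witness_a"
    using witness_a_notin_F4 by (cases "witness_a = 0") (auto simp: add_divide_distrib)
  finally show ?thesis .
qed

lemma three_solutions:
  assumes "witness_x1 \<notin> {1, \<gamma>}"
  shows "3 \<le> card {x. cdiff witness_a x = 1 + c / witness_a}"
proof -
  have "witness_x1 \<noteq> 0"
    using witness_x1_eq_iff[of 0] c_ne_0 one_add_c_ne_0 by auto
  hence sols: "{witness_a, witness_x0, witness_x1} \<subseteq> {x. cdiff witness_a x = 1 + c / witness_a}"
    using assms by (auto simp: cdiff_witness_a cdiff_witness_x0 cdiff_witness_x1)
  have "witness_x0 \<noteq> witness_x1"
  proof
    assume "witness_x0 = witness_x1"
    hence "\<omega>^2 * (1 + c) / (\<omega>^2 * (1 + c) + 1) = 1 + c"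
      using witness_x1_add_a witness_x0_add_a by simp
    hence "\<omega>^2 * (1 + c) = (1 + c) * (\<omega>^2 * (1 + c) + 1)"
      using witness_a_add_c_ne_0(1) by (simp add: divide_eq_eq)
    hence "(1 + c) * (\<omega>^2 * (1 + c) + 1) = (1 + c) * \<omega>^2"
      by (metis mult.commute)
    hence "\<omega>^2 * (1 + c) + 1 = \<omega>^2"
      using one_add_c_ne_0 by simp
    thus False
      using witness_a_add_c_notin_F4 omega_sq_in_F4 by simp
  qed
  moreover have "witness_x0 \<noteq> witness_a" "witness_x1 \<noteq> witness_a"
    using witness_x0_add_a one_add_c_ne_0 witness_x1_add_a_notin_F4
    by (auto simp: numeral_CHAR_2[OF CHAR_2])
  ultimately have "card {witness_a, witness_x0, witness_x1} = 3"
    by auto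
  thus ?thesis
    using card_mono[OF finite sols] by simp
qed

end

context cdiff_setting
begin

lemma cDelta_ge_3_of_cube_root:
  assumes \<omega>: "\<omega>^2 = \<omega> + 1"
    and ne: "c * (1 + c) \<noteq> \<omega> * (1 + c) + c" "c * (1 + c) \<noteq> \<gamma> * (\<omega> * (1 + c) + c)"
  shows "\<exists>a b. 3 \<le> cDelta (invCycle \<gamma>) c a b"
proof -
  interpret cdiff_witness \<gamma> c \<omega>
    by unfold_locales (fact \<omega>)
  have "witness_x1 \<notin> {1, \<gamma>}"
    using witness_x1_eq_iff[of 1] witness_x1_eq_iff[of \<gamma>] ne by (simp add: witness_a_def)
  thus ?thesis
    using three_solutions by (auto simp: cDelta_eq_card)
qed

lemma cDelta_ge_3: "\<exists>a b. 3 \<le> cDelta (invCycle \<gamma>) c a b"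
proof (cases "c^2 + \<gamma> * c + \<gamma> = 0")
  case False
  have s1: "c * (1 + c) + (\<gamma> * (1 + c) + c) = c^2 + \<gamma> * c + \<gamma>"
    and s2: "c * (1 + c) + \<gamma> * (\<gamma> * (1 + c) + c) = (c + \<gamma>)^2"
    by (simp_all add: gf4_simps)
  show ?thesis
  proof (rule cDelta_ge_3_of_cube_root[OF gamma_sq])
    show "c * (1 + c) \<noteq> \<gamma> * (1 + c) + c"
      by (rule neq_if_add_ne_0) (unfold s1, rule False)
    show "c * (1 + c) \<noteq> \<gamma> * (\<gamma> * (1 + c) + c)"
      by (rule neq_if_add_ne_0) (unfold s2, simp add: c_add_gamma_ne_0)
  qed
next
  case True
  have s1: "c * (1 + c) + ((\<gamma> + 1) * (1 + c) + c) = (c^2 + \<gamma> * c + \<gamma>) + (c + 1)"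
    and s2: "c * (1 + c) + \<gamma> * ((\<gamma> + 1) * (1 + c) + c) = (c^2 + \<gamma> * c + \<gamma>) + (\<gamma> + 1)"
    by (simp_all add: gf4_simps)
  show ?thesis
  proof (rule cDelta_ge_3_of_cube_root)
    show "(\<gamma> + 1)^2 = (\<gamma> + 1) + 1"
      by (simp add: gf4_simps)
    show "c * (1 + c) \<noteq> (\<gamma> + 1) * (1 + c) + c"
      by (rule neq_if_add_ne_0) (unfold s1 True, simp add: c_add_1_ne_0)
    show "c * (1 + c) \<noteq> \<gamma> * ((\<gamma> + 1) * (1 + c) + c)"
      by (rule neq_if_add_ne_0) (unfold s2 True, simp add: gamma_add_1_ne_0)
  qed
qed

end

section \<open>The trace conditions\<close>

locale cdiff_trace = cdiff_setting \<gamma> c for \<gamma> c :: "'a::{field,finite}" +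
  fixes n :: nat
  assumes card_eq: "card (UNIV :: 'a set) = 2 ^ n" and even_n: "even n"
begin

definition trace_condition :: bool where
  "trace_condition \<longleftrightarrow>
    tr n (c * \<gamma>) = 1 \<and> tr n (c * \<gamma>^2) = 1 \<and>
    tr n (inverse c * \<gamma>) = 1 \<and> tr n (inverse c * \<gamma>^2) = 1 \<and>
    tr n (c / (c + \<gamma>)^2) = 1 \<and> tr n (c * \<gamma>^2 / (c + \<gamma>)^2) = 1 \<and>
    tr n (c * \<gamma> / (c + \<gamma>^2)^2) = 1 \<and> tr n (c / (c + \<gamma>^2)^2) = 1"

lemma tr_add_1: "tr n (x + 1) = tr n x" for x :: 'a
  by (simp add: tr_add[OF CHAR_2] tr_one[OF CHAR_2 even_n])

lemma base_collision_trace: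
  assumes a: "a \<notin> F4" and st: "s \<in> {0, 1, \<gamma>}" "t \<in> {0, 1, \<gamma>}" "s \<noteq> t"
    and eq: "cdiff a s = cdiff a t"
  shows "tr n (inverse c * \<gamma>^2) = 0"
proof -
  have "tr n (1 / ((c * invCycle \<gamma> s + c * invCycle \<gamma> t) * ((a + s) + (a + t)))) = 0"
    using eq cdiff_base_point[OF a st(1)] cdiff_base_point[OF a st(2)]
      add_base_point_notin[OF a st(1)] add_base_point_notin[OF a st(2)]
      invCycle_base_pair[OF st] c_ne_0 gamma_ne_0
    by (intro tr_inverse_collision_same[OF CHAR_2 card_eq])
      (auto simp: add_add_cancel_left simp flip: distrib_left mult.assoc)
  moreover have "(c * invCycle \<gamma> s + c * invCycle \<gamma> t) * ((a + s) + (a + t)) = c * \<gamma>"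
    using invCycle_base_pair[OF st] by (simp add: add_add_cancel_left mult.assoc flip: distrib_left)
  moreover have "1 / (c * \<gamma>) = inverse c * \<gamma>^2"
    by (simp add: divide_inverse inverse_mult_distrib inverse_gamma gamma_sq)
  ultimately show ?thesis
    by simp
qed

lemma shifted_collision_trace:
  assumes a: "a \<notin> F4" and st: "s \<in> {0, 1, \<gamma>}" "t \<in> {0, 1, \<gamma>}" "s \<noteq> t"
    and eq: "cdiff a (a + s) = cdiff a (a + t)"
  shows "tr n (c * \<gamma>^2) = 0"
proof -
  have "tr n (c / ((invCycle \<gamma> s + invCycle \<gamma> t) * ((a + s) + (a + t)))) = 0"
    using eq cdiff_shifted_base_point[OF a st(1)] cdiff_shifted_base_point[OF a st(2)]
      add_base_point_notin[OF a st(1)] add_base_point_notin[OF a st(2)]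
      invCycle_base_pair[OF st] gamma_ne_0
    by (intro tr_inverse_collision_same[OF CHAR_2 card_eq]) (auto simp: add_add_cancel_left)
  moreover have "(invCycle \<gamma> s + invCycle \<gamma> t) * ((a + s) + (a + t)) = \<gamma>"
    using invCycle_base_pair[OF st] by (simp add: add_add_cancel_left)
  moreover have "c / \<gamma> = c * \<gamma>^2"
    by (simp add: divide_inverse inverse_gamma gamma_sq)
  ultimately show ?thesis
    by simp
qed

text \<open>After cancelling the unit \<open>\<mu>\<^sup>2\<close>, the invariant \<open>N / B\<^sup>2\<close> of the collision quadratic
  becomes \<open>X / D\<^sup>2\<close>; the six instances below give six of the trace expressions of the theorem.\<close>

lemma mixed_collision_trace:
  assumes a: "a \<notin> F4" and st: "s \<in> {0, 1, \<gamma>}" "t \<in> {0, 1, \<gamma>}"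
    and eq: "cdiff a s = cdiff a (a + t)"
    and B: "(c * invCycle \<gamma> s + invCycle \<gamma> t) * (s + t) + 1 + c = \<mu> * D"
    and N: "(c * invCycle \<gamma> s + invCycle \<gamma> t)
        * ((c * invCycle \<gamma> s + invCycle \<gamma> t) * s * t + 1 * t + c * s) = \<mu>^2 * X"
    and nz: "\<mu> \<noteq> 0" "D \<noteq> 0"
  shows "tr n (X / D^2) = 0"
proof -
  have "tr n ((c * invCycle \<gamma> s + invCycle \<gamma> t)
      * ((c * invCycle \<gamma> s + invCycle \<gamma> t) * s * t + 1 * t + c * s)
      / ((c * invCycle \<gamma> s + invCycle \<gamma> t) * (s + t) + 1 + c)^2) = 0"
    using eq cdiff_base_point[OF a st(1)] cdiff_shifted_base_point[OF a st(2)]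
      add_base_point_notin[OF a st(1)] add_base_point_notin[OF a st(2)] B nz
    by (intro tr_inverse_collision[OF CHAR_2 card_eq]) auto
  thus ?thesis
    unfolding B N using nz by (simp add: power_mult_distrib)
qed

lemma mixed_collision_traces:
  assumes a: "a \<notin> F4" and st: "s \<in> {0, 1, \<gamma>}" "t \<in> {0, 1, \<gamma>}" "s \<noteq> t"
    and eq: "cdiff a s = cdiff a (a + t)"
  shows "tr n (c * \<gamma>) = 0 \<or> tr n (c / (c + \<gamma>)^2) = 0 \<or> tr n (inverse c * \<gamma>) = 0 \<or>
    tr n (c * \<gamma>^2 / (c + \<gamma>)^2) = 0 \<or> tr n (c * \<gamma> / (c + \<gamma>^2)^2) = 0 \<or>
    tr n (c / (c + \<gamma>^2)^2) = 0"
proof -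
  note collision = mixed_collision_trace[OF a st(1,2) eq]
  from st show ?thesis
  proof (elim insertE emptyE; simp only: simp_thms)
    assume "s = 0" "t = 1"
    hence "tr n ((c * \<gamma> + 1) / 1^2) = 0"
      by (intro collision[of \<gamma>]) (use gamma_ne_0 in \<open>simp_all add: gf4_simps\<close>)
    thus ?thesis by (simp add: tr_add_1)
  next
    assume "s = 0" "t = \<gamma>"
    hence "tr n (c / (c + \<gamma>)^2) = 0"
      by (intro collision[of "\<gamma>^2"])
        (use gamma_ne_0 gamma_add_1_ne_0 c_add_gamma_ne_0 in \<open>simp_all add: gf4_simps\<close>)
    thus ?thesis by simp
  next
    assume "s = 1" "t = 0"
    hence "tr n (\<gamma> * (c * \<gamma> + c + 1) * c / c^2) = 0"
      by (intro collision[of \<gamma>]) (use gamma_ne_0 c_ne_0 in \<open>simp_all add: gf4_simps\<close>)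
    moreover have "\<gamma> * (c * \<gamma> + c + 1) * c / c^2 = inverse c * \<gamma> + 1"
      using c_ne_0 by (simp add: field_simps gf4_simps)
    ultimately show ?thesis by (simp add: tr_add_1)
  next
    assume "s = 1" "t = \<gamma>"
    hence "tr n (c * \<gamma>^2 / (c + \<gamma>)^2) = 0"
      by (intro collision[of "\<gamma>^2"])
        (use gamma_ne_0 gamma_add_1_ne_0 c_add_gamma_ne_0 in \<open>simp_all add: gf4_simps\<close>)
    thus ?thesis by simp
  next
    assume "s = \<gamma>" "t = 0"
    hence "tr n (c * \<gamma> / (c + \<gamma>^2)^2) = 0"
      by (intro collision[of 1]) (use c_add_gamma_add_1_ne_0 in \<open>simp_all add: gf4_simps\<close>)
    thus ?thesis by simp
  next
    assume "s = \<gamma>" "t = 1"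
    hence "tr n (c / (c + \<gamma>^2)^2) = 0"
      by (intro collision[of 1]) (use c_add_gamma_add_1_ne_0 in \<open>simp_all add: gf4_simps\<close>)
    thus ?thesis by simp
  qed
qed

lemma mixed_collision_not_trace_condition:
  assumes "a \<notin> F4" "s \<in> {0, 1, \<gamma>}" "t \<in> {0, 1, \<gamma>}" "s \<noteq> t"
    and "cdiff a s = cdiff a (a + t)"
  shows "\<not> trace_condition"
  using mixed_collision_traces[OF assms] by (auto simp: trace_condition_def)

lemma inj_on_exceptional_if_trace_condition:
  assumes a: "a \<notin> F4" and tc: "trace_condition"
  shows "inj_on (cdiff a) (exceptional a)"
proof (rule inj_onI, rule ccontr)
  fix u v assume u: "u \<in> exceptional a" and v: "v \<in> exceptional a"
    and eq: "cdiff a u = cdiff a v" and "u \<noteq> v"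
  have a0: "a \<noteq> 0"
    using a by auto
  have traces: "tr n (inverse c * \<gamma>^2) \<noteq> 0" "tr n (c * \<gamma>^2) \<noteq> 0"
    using tc by (auto simp: trace_condition_def)
  have mixed: False if "s \<in> {0, 1, \<gamma>}" "t \<in> {0, 1, \<gamma>}" "cdiff a s = cdiff a (a + t)" for s t
    using that mixed_collision_not_trace_condition[OF a that(1,2) _ that(3)] tc
      cdiff_shift_ne[OF a0, of s] by (cases "s = t") (auto simp: add.commute)
  from u v \<open>u \<noteq> v\<close> show False
  proof (cases rule: exceptional_cases[OF u]; cases rule: exceptional_cases[OF v])
    fix s t assume "s \<in> {0, 1, \<gamma>}" "u = s" "t \<in> {0, 1, \<gamma>}" "v = t"
    thus False
      using base_collision_trace[OF a, of s t] eq traces \<open>u \<noteq> v\<close> by auto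
  next
    fix s t assume "s \<in> {0, 1, \<gamma>}" "u = s" "t \<in> {0, 1, \<gamma>}" "v = a + t"
    thus False
      using mixed[of s t] eq by simp
  next
    fix s t assume "s \<in> {0, 1, \<gamma>}" "u = a + s" "t \<in> {0, 1, \<gamma>}" "v = t"
    thus False
      using mixed[of t s] eq by simp
  next
    fix s t assume "s \<in> {0, 1, \<gamma>}" "u = a + s" "t \<in> {0, 1, \<gamma>}" "v = a + t"
    thus False
      using shifted_collision_trace[OF a, of s t] eq traces \<open>u \<noteq> v\<close> by auto
  qed
qed

lemma cDelta_le_3_if_trace_condition:
  assumes "trace_condition"
  shows "cDelta (invCycle \<gamma>) c a b \<le> 3"
proof (cases "a = 0")
  case True
  thus ?thesis
    using card_solutions_a0_le_1[of b] by (simp add: cDelta_eq_card)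
next
  case False
  have "card ({x. cdiff a x = b} \<inter> exceptional a) \<le> 1"
    using card_solutions_exceptional_F4_le_1[of a b]
      card_fiber_le_1[OF inj_on_exceptional_if_trace_condition[OF _ assms]] by (cases "a \<in> F4") auto
  thus ?thesis
    using cDelta_le_exceptional[OF False, of b] by simp
qed

end

section \<open>The \<open>c\<close>-differential uniformity\<close>

lemma finite_cDelta_values:
  fixes F :: "'a::{field,finite} \<Rightarrow> 'a"
  shows "finite {cDelta F c a b | a b. a \<noteq> 0 \<or> c \<noteq> 1}"
  by (rule finite_subset[of _ "(\<lambda>(a, b). cDelta F c a b) ` UNIV"]) auto

lemma cDU_le:
  fixes F :: "'a::{field,finite} \<Rightarrow> 'a"
  assumes "\<And>a b. cDelta F c a b \<le> k"
  shows "cDU F c \<le> k"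
proof -
  have "cDelta F c 1 0 \<in> {cDelta F c a b | a b. a \<noteq> 0 \<or> c \<noteq> 1}"
    by auto
  thus ?thesis
    unfolding cDU_def using finite_cDelta_values assms by (subst Max_le_iff) auto
qed

lemma cDU_ge:
  fixes F :: "'a::{field,finite} \<Rightarrow> 'a"
  assumes "a \<noteq> 0 \<or> c \<noteq> 1" "k \<le> cDelta F c a b"
  shows "k \<le> cDU F c"
  unfolding cDU_def using finite_cDelta_values assms by (intro Max_ge_iff[THEN iffD2]) auto

theorem mainTheorem11:
  fixes n :: nat and \<gamma> c :: "'a::{field,finite}"
  assumes "card (UNIV :: 'a set) = 2 ^ n" and "even n" and "n \<ge> 4"
    and "\<gamma> ^ 4 = \<gamma>" and "\<gamma> \<noteq> 0" and "\<gamma> \<noteq> 1"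
    and "c ^ 4 \<noteq> c"
  shows "3 \<le> cDU (invCycle \<gamma>) c \<and> cDU (invCycle \<gamma>) c \<le> 4 \<and>
    ((tr n (c * \<gamma>) = 1 \<and> tr n (c * \<gamma>^2) = 1 \<and>
      tr n (inverse c * \<gamma>) = 1 \<and> tr n (inverse c * \<gamma>^2) = 1 \<and>
      tr n (c / (c + \<gamma>)^2) = 1 \<and> tr n (c * \<gamma>^2 / (c + \<gamma>)^2) = 1 \<and>
      tr n (c * \<gamma> / (c + \<gamma>^2)^2) = 1 \<and> tr n (c / (c + \<gamma>^2)^2) = 1)
     \<longrightarrow> cDU (invCycle \<gamma>) c = 3)"
proof -
  have char: "CHAR('a) = 2"
    using CHAR_eq_2_of_card[OF assms(1)] assms(3) by simp
  interpret cdiff_trace \<gamma> c n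
  proof
    show "\<gamma>^2 = \<gamma> + 1"
      using F4_square[OF char] assms(4-6) by (simp add: F4_def)
  qed (use char assms(1,2,7) in \<open>simp_all add: F4_def\<close>)
  have c_ne_1: "c \<noteq> 1"
    using assms(7) by auto
  obtain a b where "3 \<le> cDelta (invCycle \<gamma>) c a b"
    using cDelta_ge_3 by blast
  hence "3 \<le> cDU (invCycle \<gamma>) c"
    using c_ne_1 by (intro cDU_ge) auto
  moreover have "cDU (invCycle \<gamma>) c \<le> 4"
    using cDelta_le_4 by (rule cDU_le)
  moreover have "cDU (invCycle \<gamma>) c \<le> 3" if trace_condition
    using cDelta_le_3_if_trace_condition[OF that] by (rule cDU_le)
  ultimately show ?thesis
    unfolding trace_condition_def by auto
qed

end
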